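(* Let $\tau\ge1$, two candidates $P,Q$, and let $Z^*$ be a point of the metric space minimizing $SC$. If $P$ beats $Q$ under Weighted Majority Rule 3 and $\delta_I=SC(P)/SC(Q)>\tau$, then $SC(P)/SC(Z^* )\le\frac{2\delta_I}{\delta_I-\tau}$.
   Context: Voters $N$ and candidates are points of an arbitrary metric space $(X,d)$; $SC(Y)=\sum_{i\in N}d(i,Y)$ for $Y\in X$. Let $A=\{i: d(i,Q)/d(i,P)\ge\tau\}$ and $B=\{j: d(j,P)/d(j,Q)\ge\tau\}$. Weighted Majority Rule 3 selects $P$ over $Q$ iff $|A|\ge|B|$. *)

theory Defs
  imports "HOL-Analysis.Analysis"
begin

definition SC :: "'v set \<Rightarrow> ('v \<Rightarrow> 'a::metric_space) \<Rightarrow> 'a \<Rightarrow> real" where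
  "SC N loc Y = (\<Sum>i\<in>N. dist (loc i) Y)"

text \<open>A = voters with d(i,Q)/d(i,P) >= tau, written multiplicatively so that a
zero denominator counts as ratio +infinity.\<close>
definition setA :: "real \<Rightarrow> 'v set \<Rightarrow> ('v \<Rightarrow> 'a::metric_space) \<Rightarrow> 'a \<Rightarrow> 'a \<Rightarrow> 'v set" where
  "setA \<tau> N loc P Q = {i\<in>N. dist (loc i) Q \<ge> \<tau> * dist (loc i) P}"

definition setB :: "real \<Rightarrow> 'v set \<Rightarrow> ('v \<Rightarrow> 'a::metric_space) \<Rightarrow> 'a \<Rightarrow> 'a \<Rightarrow> 'v set" where
  "setB \<tau> N loc P Q = {j\<in>N. dist (loc j) P \<ge> \<tau> * dist (loc j) Q}"

definition WMR3_selects :: "real \<Rightarrow> 'v set \<Rightarrow> ('v \<Rightarrow> 'a::metric_space) \<Rightarrow> 'a \<Rightarrow> 'a \<Rightarrow> bool" where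
  "WMR3_selects \<tau> N loc P Q \<longleftrightarrow> card (setA \<tau> N loc P Q) \<ge> card (setB \<tau> N loc P Q)"

end

theory Submission
  imports Defs
begin

text \<open>For every point Z, each voter x satisfies
  d(x,P) - \<tau> d(x,Q) \<le> 2 d(x,Z) + c ([x \<in> B] - [x \<in> A]) with c = max 0 (d(Z,P) - d(Z,Q)),
by two applications of the triangle inequality. Summing over the voters and using |B| \<le> |A|
gives SC(P) - \<tau> SC(Q) \<le> 2 SC(Z); in particular this holds for the optimum Z, and dividing
by SC(Q) yields the stated distortion bound.\<close>

lemma dist_diff_le_dist_diff:
  fixes x P Q Z :: "'a::metric_space"
  shows "dist x P - dist x Q \<le> 2 * dist x Z + (dist Z P - dist Z Q)"
  using dist_triangle[of x P Z] dist_triangle[of Z Q x] by (simp add: dist_commute)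

lemma voter_cost_bound:
  fixes \<tau> :: real and x P Q Z :: "'a::metric_space"
  assumes "\<tau> \<ge> 1"
  defines "c \<equiv> max 0 (dist Z P - dist Z Q)"
  shows "dist x P - \<tau> * dist x Q
           \<le> 2 * dist x Z + c * (of_bool (\<tau> * dist x Q \<le> dist x P) - of_bool (\<tau> * dist x P \<le> dist x Q))"
proof -
  let ?p = "dist x P" and ?q = "dist x Q" and ?z = "dist x Z"
  have c_bound: "c \<le> 2 * ?z + max 0 (?p - ?q)"
    using dist_diff_le_dist_diff[of Z P Q x] by (simp add: c_def dist_commute)
  have "\<tau> * ?q \<ge> ?q" and "\<tau> * ?p \<ge> ?p"
    using assms(1) by (simp_all add: mult_right_mono[of 1 \<tau>, simplified])
  moreover have "?p - ?q \<le> 2 * ?z + c"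
    using dist_diff_le_dist_diff[of x P Q Z] by (simp add: c_def)
  moreover have "c \<ge> 0" by (simp add: c_def)
  ultimately show ?thesis
    using c_bound by (auto simp: of_bool_def)
qed

lemma WMR3_selects_imp_SC_le:
  fixes \<tau> :: real and N :: "'v set" and loc :: "'v \<Rightarrow> 'a::metric_space" and P Q Z :: 'a
  assumes "\<tau> \<ge> 1" and "finite N" and "WMR3_selects \<tau> N loc P Q"
  shows "SC N loc P - \<tau> * SC N loc Q \<le> 2 * SC N loc Z"
proof -
  define c where "c = max 0 (dist Z P - dist Z Q)"
  let ?inB = "\<lambda>k. \<tau> * dist (loc k) Q \<le> dist (loc k) P"
  let ?inA = "\<lambda>k. \<tau> * dist (loc k) P \<le> dist (loc k) Q"
  have "SC N loc P - \<tau> * SC N loc Q = (\<Sum>k\<in>N. dist (loc k) P - \<tau> * dist (loc k) Q)"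
    by (simp add: SC_def sum_subtractf sum_distrib_left)
  also have "\<dots> \<le> (\<Sum>k\<in>N. 2 * dist (loc k) Z + c * (of_bool (?inB k) - of_bool (?inA k)))"
    unfolding c_def by (intro sum_mono voter_cost_bound[OF assms(1)])
  also have "\<dots> = 2 * SC N loc Z
                  + c * (real (card (setB \<tau> N loc P Q)) - real (card (setA \<tau> N loc P Q)))"
    using assms(2)
    by (simp add: SC_def sum.distrib sum_distrib_left sum_subtractf right_diff_distrib
                  setA_def setB_def Int_def conj_commute)
  also have "\<dots> \<le> 2 * SC N loc Z"
    using assms(3) by (simp add: WMR3_selects_def c_def mult_nonneg_nonpos)
  finally show ?thesis .
qed

lemma ratio_le_of_linear_bound:
  fixes p q z \<tau> :: real
  assumes "q \<ge> 0" and "z \<ge> 0" and "p / q > \<tau>" and "\<tau> \<ge> 0" and "p - \<tau> * q \<le> 2 * z"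
  shows "p / z \<le> 2 * (p / q) / (p / q - \<tau>)"
proof -
  have "q > 0" using assms(1,3,4) by (cases "q = 0") auto
  then have gap: "p - \<tau> * q > 0" using assms(3) by (simp add: field_simps)
  have rhs: "2 * (p / q) / (p / q - \<tau>) = 2 * p / (p - \<tau> * q)"
    using \<open>q > 0\<close> by (simp add: field_simps)
  have "p \<ge> 0" using gap assms(1,4) by (smt (verit) mult_nonneg_nonneg)
  show ?thesis
  proof (cases "z = 0")
    case True
    then show ?thesis unfolding rhs using gap \<open>p \<ge> 0\<close> by simp
  next
    case False
    then have "z > 0" using assms(2) by simp
    then show ?thesis
      unfolding rhs using gap mult_left_mono[OF assms(5) \<open>p \<ge> 0\<close>]
      by (simp add: divide_simps mult.assoc)
  qed
qed

theorem mainTheorem17: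
  fixes \<tau> :: real and N :: "'v set" and loc :: "'v \<Rightarrow> 'a::metric_space"
    and P Q Z :: 'a
  assumes "\<tau> \<ge> 1"
    and "finite N"
    and "\<forall>Y. SC N loc Z \<le> SC N loc Y"
    and "WMR3_selects \<tau> N loc P Q"
    and "SC N loc P / SC N loc Q > \<tau>"
  shows "SC N loc P / SC N loc Z
           \<le> 2 * (SC N loc P / SC N loc Q) / (SC N loc P / SC N loc Q - \<tau>)"
proof (rule ratio_le_of_linear_bound)
  show "SC N loc Q \<ge> 0" and "SC N loc Z \<ge> 0" by (simp_all add: SC_def sum_nonneg)
  show "SC N loc P - \<tau> * SC N loc Q \<le> 2 * SC N loc Z"
    using WMR3_selects_imp_SC_le assms(1,2,4) by blast
qed (use assms(1,5) in auto)

end
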